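(* Let $\mathcal{S}=\{\mathbf{y}\in\mathbb{R}^{d_y}: \mathbf{m}_k^\top\mathbf{y}\le b_k,\ k=1,\dots,l\}$ be a bounded convex polytope with nonzero normals $\mathbf{m}_k$, and let $w_\eta(\mathbf{y})=\prod_{k=1}^l\Phi(\eta(b_k-\mathbf{m}_k^\top\mathbf{y}))$, $\eta>0$. Fix $\mathbf{x}$ and $\mathbf{a}$ and suppose the post-alteration distribution $P(\cdot\mid\mathbf{x},\mathring{\mathbf{a}})$ of $\mathbf{Y}$ has a density bounded by a constant $M$. Then, as $\eta\to\infty$, $$\Big|\mathbb{P}(\mathbf{Y}\in\mathcal{S}\mid\mathbf{x},\mathring{\mathbf{a}})-\mathbb{E}_{\mathbf{y}\sim P(\cdot\mid\mathbf{x},\mathring{\mathbf{a}})}[w_\eta(\mathbf{y})]\Big|=\mathcal{O}\!\left(\frac{\sqrt{\ln\eta}}{\eta}\right),$$ where the implied constant depends only on $\mathcal{S}$, $l$ and $M$.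
   Context: $\Phi$ is the standard normal CDF. $P(\cdot\mid\mathbf{x},\mathring{\mathbf{a}})$ is the distribution of the outcome $\mathbf{Y}$ given context $\mathbf{x}$ after the intervention setting the actionable variables $\mathbf{A}$ to $\mathbf{a}$. *)

theory Defs
  imports "HOL-Probability.Probability"
begin

definition Phi :: "real \<Rightarrow> real" where
  "Phi x = measure (density lborel (\<lambda>t. ennreal (std_normal_density t))) {..x}"

text \<open>The polytope S = {y. m_k . y <= b_k, k = 0..l-1} (indices shifted to 0-based).\<close>
definition polytope :: "(nat \<Rightarrow> 'a::euclidean_space) \<Rightarrow> (nat \<Rightarrow> real) \<Rightarrow> nat \<Rightarrow> 'a set" where
  "polytope m b l = {y. \<forall>k<l. m k \<bullet> y \<le> b k}"

definition weta :: "(nat \<Rightarrow> 'a::euclidean_space) \<Rightarrow> (nat \<Rightarrow> real) \<Rightarrow> nat \<Rightarrow> real \<Rightarrow> 'a \<Rightarrow> real" where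
  "weta m b l \<eta> y = (\<Prod>k<l. Phi (\<eta> * (b k - m k \<bullet> y)))"

end

(*
  With s = sqrt (2 ln eta), the Gaussian tail bound 1 - Phi s <= exp (- s^2 / 2) = 1 / eta shows
  that the weight w_eta is within l / eta of the indicator of S everywhere except on the boundary
  layer of width s / eta around the facets. Since S is bounded, so is a small relaxation of S
  (a consequence of Farkas' lemma), hence the relevant part of the layer lies in a fixed ball;
  there each slab has volume O(s / eta), as about eta / s disjoint translates of it fit into the
  ball. A density bounded by M converts this volume into probability O(sqrt (ln eta) / eta).
*)
theory Submission
  imports Defs "HOL-Real_Asymp.Real_Asymp"
begin

lemma std_normal_density_le_exp: "std_normal_density s \<le> exp (- s\<^sup>2 / 2)"
proof -
  have "1 \<le> sqrt (2 * pi)" using pi_gt3 by (simp add: real_le_rsqrt)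
  then show ?thesis unfolding std_normal_density_def by (simp add: divide_le_eq)
qed

text \<open>On \<open>[s, \<infinity>)\<close> with \<open>s \<ge> 1\<close> the density \<open>\<phi>\<close> is dominated by \<open>x \<phi>(x)\<close>,
  whose antiderivative is \<open>-\<phi>\<close>.\<close>
lemma std_normal_upper_tail_le:
  assumes "1 \<le> s"
  shows "(\<integral>\<^sup>+x. ennreal (std_normal_density x) * indicator {s..} x \<partial>lborel)
           \<le> ennreal (std_normal_density s)"
proof -
  have "(\<integral>\<^sup>+x. ennreal (std_normal_density x) * indicator {s..} x \<partial>lborel)
     \<le> (\<integral>\<^sup>+x. ennreal (x * std_normal_density x) * indicator {s..} x \<partial>lborel)"
  proof (rule nn_integral_mono)
    fix x
    show "ennreal (std_normal_density x) * indicator {s..} x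
            \<le> ennreal (x * std_normal_density x) * indicator {s..} x"
    proof (cases "s \<le> x")
      case True
      then have "std_normal_density x \<le> x * std_normal_density x"
        using assms mult_right_mono[of 1 x "std_normal_density x"] by simp
      then show ?thesis using True by (simp add: ennreal_leI)
    qed simp
  qed
  also have "\<dots> = ennreal (0 - (- std_normal_density s))"
  proof (rule nn_integral_FTC_atLeast)
    show "DERIV (\<lambda>x. - std_normal_density x) x :> x * std_normal_density x" for x
      unfolding std_normal_density_def
      by (auto intro!: derivative_eq_intros simp: field_simps power2_eq_square)
    show "((\<lambda>x. - std_normal_density x) \<longlongrightarrow> 0) at_top"
      unfolding std_normal_density_def by real_asymp
  qed (use assms in auto)
  finally show ?thesis by simp
qed

lemma prob_space_std_normal: "prob_space (density lborel std_normal_density)"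
  by (rule prob_space_normal_density) simp

lemma Phi_nonneg: "0 \<le> Phi x"
  unfolding Phi_def by simp

lemma Phi_le_1: "Phi x \<le> 1"
  unfolding Phi_def using prob_space.prob_le_1[OF prob_space_std_normal] by simp

lemma Phi_mono:
  assumes "x \<le> y"
  shows "Phi x \<le> Phi y"
proof -
  interpret N: prob_space "density lborel std_normal_density" by (rule prob_space_std_normal)
  show ?thesis unfolding Phi_def using assms by (intro N.finite_measure_mono) auto
qed

lemma borel_measurable_Phi [measurable]: "Phi \<in> borel_measurable borel"
  by (rule borel_measurable_mono) (auto simp: mono_def Phi_mono)

lemma one_minus_Phi_le:
  assumes "1 \<le> s"
  shows "1 - Phi s \<le> exp (- s\<^sup>2 / 2)"
proof -
  interpret N: prob_space "density lborel std_normal_density" by (rule prob_space_std_normal)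
  have "1 - Phi s = N.prob (- {..s})"
    unfolding Phi_def using N.prob_compl[of "{..s}"] by (simp add: Compl_eq_Diff_UNIV)
  also have "\<dots> \<le> N.prob {s..}"
    by (intro N.finite_measure_mono) auto
  also have "\<dots> \<le> std_normal_density s"
    using std_normal_upper_tail_le[OF assms]
    by (subst (asm) emeasure_density[symmetric]) (auto simp: N.emeasure_eq_measure mult.commute)
  finally show ?thesis using std_normal_density_le_exp by (rule order_trans)
qed

lemma Phi_neg_le:
  assumes "1 \<le> s"
  shows "Phi (- s) \<le> exp (- s\<^sup>2 / 2)"
proof -
  interpret N: prob_space "density lborel std_normal_density" by (rule prob_space_std_normal)
  have "emeasure (density lborel std_normal_density) {..-s}
       = (\<integral>\<^sup>+x. ennreal (std_normal_density x) * indicator {..-s} x \<partial>distr lborel borel uminus)"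
    by (subst emeasure_density) (auto simp: mult.commute lborel_distr_uminus)
  also have "\<dots> = (\<integral>\<^sup>+x. ennreal (std_normal_density x) * indicator {s..} x \<partial>lborel)"
    by (subst nn_integral_distr)
       (auto intro!: nn_integral_cong simp: std_normal_density_def split: split_indicator)
  also have "\<dots> \<le> ennreal (std_normal_density s)" by (rule std_normal_upper_tail_le[OF assms])
  finally have "Phi (- s) \<le> std_normal_density s"
    unfolding Phi_def N.emeasure_eq_measure by (simp add: ennreal_le_iff)
  then show ?thesis using std_normal_density_le_exp by (rule order_trans)
qed

text \<open>Separate \<open>(0, -1)\<close> from the closed cone generated by \<open>V\<close>: a separating functional
  \<open>(p, q)\<close> has \<open>q > 0\<close> and makes \<open>-p/q\<close> a feasible point.\<close>
lemma Farkas_infeasible_halfspaces: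
  fixes V :: "('a::euclidean_space \<times> real) set"
  assumes "finite V" and infeasible: "\<forall>y. \<exists>(a, c)\<in>V. c < a \<bullet> y"
  shows "\<exists>u. (\<forall>v\<in>V. 0 \<le> u v) \<and> (\<Sum>v\<in>V. u v *\<^sub>R fst v) = 0 \<and> (\<Sum>v\<in>V. u v * snd v) < 0"
proof -
  let ?K = "convex_cone hull V"
  have "V \<noteq> {}" using infeasible by blast
  have "(0, -1) \<in> ?K"
  proof (rule ccontr)
    assume "(0, -1) \<notin> ?K"
    then obtain p q \<beta> where sep: "(p, q) \<bullet> (0::'a, -1::real) < \<beta>" "\<forall>x\<in>?K. \<beta> < (p, q) \<bullet> x"
      using separating_hyperplane_closed_point[OF convex_convex_cone_hull closed_convex_cone_hull[OF \<open>finite V\<close>]]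
      by (metis surj_pair)
    have "\<beta> < 0" using sep(2) convex_cone_hull_contains_0 by fastforce
    have "0 \<le> (p, q) \<bullet> v" if "v \<in> V" for v
    proof (rule ccontr)
      assume neg: "\<not> 0 \<le> (p, q) \<bullet> v"
      have "(\<beta> / ((p, q) \<bullet> v)) *\<^sub>R v \<in> ?K"
        using neg \<open>\<beta> < 0\<close> that conic_convex_cone_hull[of V]
        by (intro conicD[where S = ?K]) (auto intro: hull_inc simp: divide_nonpos_neg)
      then show False using sep(2) neg by fastforce
    qed
    moreover have "0 < q" using sep(1) \<open>\<beta> < 0\<close> by simp
    ultimately have "a \<bullet> (- (1 / q) *\<^sub>R p) \<le> c" if "(a, c) \<in> V" for a c
      using that by (fastforce simp: field_simps inner_commute)
    moreover obtain a c where "(a, c) \<in> V" "c < a \<bullet> (- (1 / q) *\<^sub>R p)"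
      using infeasible by blast
    ultimately show False by fastforce
  qed
  then obtain c x where "0 \<le> c" "x \<in> convex hull V" "(0, -1) = c *\<^sub>R x"
    using convex_cone_hull_convex_hull_nonempty[OF \<open>V \<noteq> {}\<close>] by blast
  moreover obtain u where "\<forall>v\<in>V. 0 \<le> u v" "(\<Sum>v\<in>V. u v *\<^sub>R v) = x"
    using convex_hull_finite[OF \<open>finite V\<close>] \<open>x \<in> convex hull V\<close> by auto
  ultimately have "\<forall>v\<in>V. 0 \<le> c * u v" "(\<Sum>v\<in>V. (c * u v) *\<^sub>R v) = (0, -1)"
    by (auto simp: scaleR_sum_right)
  then show ?thesis
    by (intro exI[of _ "\<lambda>v. c * u v"])
       (auto simp: fst_sum snd_sum dest: arg_cong[where f = fst] arg_cong[where f = snd])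
qed

lemma eventually_relaxed_halfspaces_infeasible:
  fixes V :: "('a::euclidean_space \<times> real) set"
  assumes "finite V" and "\<forall>y. \<exists>(a, c)\<in>V. c < a \<bullet> y"
  shows "\<forall>\<^sub>F t in at_right 0. \<forall>y::'a. \<exists>(a, c)\<in>V. c + t < a \<bullet> y"
proof -
  obtain u where u: "\<forall>v\<in>V. 0 \<le> u v" "(\<Sum>v\<in>V. u v *\<^sub>R fst v) = 0" "(\<Sum>v\<in>V. u v * snd v) < 0"
    using Farkas_infeasible_halfspaces[OF assms] by blast
  define \<sigma> where "\<sigma> = (\<Sum>v\<in>V. u v)"
  define \<gamma> where "\<gamma> = (\<Sum>v\<in>V. u v * snd v)"
  have "0 \<le> \<sigma>" "\<gamma> < 0" using u by (auto simp: \<sigma>_def \<gamma>_def sum_nonneg)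
  have "\<forall>y::'a. \<exists>(a, c)\<in>V. c + t < a \<bullet> y" if "t * \<sigma> < - \<gamma>" for t
  proof (rule ccontr)
    assume "\<not> (\<forall>y::'a. \<exists>(a, c)\<in>V. c + t < a \<bullet> y)"
    then obtain y :: 'a where y: "\<forall>v\<in>V. fst v \<bullet> y \<le> snd v + t"
      by (auto simp: not_less case_prod_beta)
    have "0 = (\<Sum>v\<in>V. u v *\<^sub>R fst v) \<bullet> y" using u(2) by simp
    also have "\<dots> = (\<Sum>v\<in>V. u v * (fst v \<bullet> y))" by (simp add: inner_sum_left)
    also have "\<dots> \<le> (\<Sum>v\<in>V. u v * (snd v + t))"
      using u(1) y by (intro sum_mono mult_left_mono) auto
    also have "\<dots> = \<gamma> + t * \<sigma>"
      by (simp add: \<gamma>_def \<sigma>_def distrib_left sum.distrib sum_distrib_left mult.commute)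
    finally show False using that by linarith
  qed
  moreover have "\<forall>\<^sub>F t in at_right 0. t * \<sigma> < - \<gamma>"
  proof -
    have "((\<lambda>t. t * \<sigma>) \<longlongrightarrow> 0 * \<sigma>) (at_right 0)" by (intro tendsto_intros)
    then show ?thesis using \<open>\<gamma> < 0\<close> by (intro order_tendstoD(2)) auto
  qed
  ultimately show ?thesis by (auto elim: eventually_mono)
qed

lemma eventually_relaxed_polytope_subset_halfspace:
  fixes m :: "nat \<Rightarrow> 'a::euclidean_space"
  assumes "\<forall>y\<in>polytope m b l. a \<bullet> y < c"
  shows "\<forall>\<^sub>F t in at_right 0. polytope m (\<lambda>k. b k + t) l \<subseteq> {y. a \<bullet> y < c}"
proof -
  define V where "V = insert (- a, - c) ((\<lambda>k. (m k, b k)) ` {..<l})"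
  have "\<forall>y. \<exists>(a', c')\<in>V. c' < a' \<bullet> y"
    using assms by (force simp: V_def polytope_def not_le)
  then have "\<forall>\<^sub>F t in at_right 0. \<forall>y. \<exists>(a', c')\<in>V. c' + t < a' \<bullet> y"
    by (intro eventually_relaxed_halfspaces_infeasible) (simp add: V_def)
  with eventually_at_right_less show ?thesis
  proof eventually_elim
    case (elim t)
    show ?case
    proof
      fix y assume y: "y \<in> polytope m (\<lambda>k. b k + t) l"
      obtain a' c' where "(a', c') \<in> V" "c' + t < a' \<bullet> y" using elim(2) by blast
      with y \<open>0 < t\<close> show "y \<in> {y. a \<bullet> y < c}" by (auto simp: V_def polytope_def)
    qed
  qed
qed

lemma eventually_relaxed_polytope_bounded:
  fixes m :: "nat \<Rightarrow> 'a::euclidean_space"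
  assumes "bounded (polytope m b l)"
  shows "\<exists>R. \<forall>\<^sub>F t in at_right 0. polytope m (\<lambda>k. b k + t) l \<subseteq> cball 0 R"
proof -
  obtain R where R: "\<And>y. y \<in> polytope m b l \<Longrightarrow> norm y \<le> R"
    using assms by (auto simp: bounded_iff)
  have "\<forall>\<^sub>F t in at_right 0. polytope m (\<lambda>k. b k + t) l \<subseteq> {y. (\<sigma> *\<^sub>R i) \<bullet> y < R + 1}"
    if "(i, \<sigma>) \<in> Basis \<times> {-1, 1}" for i \<sigma>
  proof (intro eventually_relaxed_polytope_subset_halfspace ballI)
    fix y assume "y \<in> polytope m b l"
    then have "\<bar>i \<bullet> y\<bar> \<le> R" using R Basis_le_norm[of i y] that by (force simp: inner_commute)
    then show "(\<sigma> *\<^sub>R i) \<bullet> y < R + 1" using that by auto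
  qed
  then have "\<forall>\<^sub>F t in at_right 0. \<forall>(i, \<sigma>)\<in>Basis \<times> {-1, 1}.
      polytope m (\<lambda>k. b k + t) l \<subseteq> {y. (\<sigma> *\<^sub>R i) \<bullet> y < R + 1}"
    by (intro eventually_ball_finite) auto
  then have "\<forall>\<^sub>F t in at_right 0. polytope m (\<lambda>k. b k + t) l \<subseteq> cball 0 (DIM('a) * (R + 1))"
  proof (rule eventually_mono, safe)
    fix t y
    assume "\<forall>(i, \<sigma>)\<in>Basis \<times> {-1, 1}. polytope m (\<lambda>k. b k + t) l \<subseteq> {y. (\<sigma> *\<^sub>R i) \<bullet> y < R + 1}"
      and "y \<in> polytope m (\<lambda>k. b k + t) l"
    then have "\<bar>y \<bullet> i\<bar> \<le> R + 1" if "i \<in> Basis" for i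
      using that by (fastforce simp: inner_commute abs_le_iff)
    then have "norm y \<le> DIM('a) * (R + 1)"
      using norm_le_l1[of y] sum_mono[of Basis "\<lambda>i. \<bar>y \<bullet> i\<bar>" "\<lambda>_. R + 1"] by simp
    then show "y \<in> cball 0 (DIM('a) * (R + 1))" by simp
  qed
  then show ?thesis by blast
qed

lemma measure_le_of_disjoint_translates:
  fixes S A :: "'a::euclidean_space set"
  assumes S: "S \<in> lmeasurable" and A: "A \<in> lmeasurable"
    and translates_sub: "\<And>j y. j < N \<Longrightarrow> y \<in> S \<Longrightarrow> real j *\<^sub>R v + y \<in> A"
    and translates_disjoint: "\<And>i j. i < N \<Longrightarrow> j < N \<Longrightarrow> i \<noteq> j \<Longrightarrow>
           (+) (real i *\<^sub>R v) ` S \<inter> (+) (real j *\<^sub>R v) ` S = {}"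
  shows "real N * measure lebesgue S \<le> measure lebesgue A"
proof -
  have "real N * measure lebesgue S = (\<Sum>j<N. measure lebesgue ((+) (real j *\<^sub>R v) ` S))"
    by (simp add: measure_translation)
  also have "\<dots> = measure lebesgue (\<Union>j<N. (+) (real j *\<^sub>R v) ` S)"
    by (rule measure_UNION'[symmetric])
       (use S translates_disjoint in \<open>auto intro: measurable_translation simp: pairwise_def disjnt_def\<close>)
  also have "\<dots> \<le> measure lebesgue A"
    by (rule measure_mono_fmeasurable)
       (use translates_sub A S in \<open>auto intro!: fmeasurableD measurable_translation\<close>)
  finally show ?thesis .
qed

lemma slab_translates_disjoint:
  fixes m v :: "'a::real_inner"
  assumes "m \<bullet> v = 2 * t" and "S \<subseteq> {y. \<bar>c - m \<bullet> y\<bar> < t}" and "i \<noteq> j"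
  shows "(+) (real i *\<^sub>R v) ` S \<inter> (+) (real j *\<^sub>R v) ` S = {}"
proof (rule ccontr)
  assume "(+) (real i *\<^sub>R v) ` S \<inter> (+) (real j *\<^sub>R v) ` S \<noteq> {}"
  then obtain y y' where "y \<in> S" "y' \<in> S" and eq: "real i *\<^sub>R v + y = real j *\<^sub>R v + y'"
    by auto
  have "m \<bullet> (real i *\<^sub>R v + y) = m \<bullet> (real j *\<^sub>R v + y')" using eq by simp
  then have "2 * t * real i + m \<bullet> y = 2 * t * real j + m \<bullet> y'"
    using assms(1) by (simp add: inner_add_right algebra_simps)
  moreover have "\<bar>c - m \<bullet> y\<bar> < t" "\<bar>c - m \<bullet> y'\<bar> < t" using \<open>y \<in> S\<close> \<open>y' \<in> S\<close> assms(2) by auto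
  ultimately have "\<bar>2 * t * (real i - real j)\<bar> < 2 * t" by (simp add: algebra_simps abs_less_iff)
  moreover have "0 < t" using \<open>\<bar>c - m \<bullet> y\<bar> < t\<close> by linarith
  ultimately have "\<bar>real i - real j\<bar> < 1" by (simp add: abs_mult)
  then show False using \<open>i \<noteq> j\<close> by linarith
qed

text \<open>About \<open>norm m / (2 t)\<close> disjoint translates of the slab fit into the ball of radius \<open>R + 1\<close>.\<close>
lemma measure_slab_Int_cball_le:
  fixes m :: "'a::euclidean_space"
  assumes "m \<noteq> 0" and "0 < t"
  shows "measure lebesgue ({y. \<bar>c - m \<bullet> y\<bar> < t} \<inter> cball 0 R)
           \<le> 4 * t / norm m * measure lebesgue (cball (0::'a) (R + 1))"
proof -
  define S where "S = {y. \<bar>c - m \<bullet> y\<bar> < t} \<inter> cball (0::'a) R"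
  define V where "V = measure lebesgue (cball (0::'a) (R + 1))"
  have S_lmeasurable: "S \<in> lmeasurable"
    unfolding S_def by (intro bounded_set_imp_lmeasurable sets_completionI_sets) (auto simp: bounded_Int)
  have "0 < norm m" "0 \<le> V" using \<open>m \<noteq> 0\<close> by (simp_all add: V_def)
  show ?thesis
  proof (cases "norm m < 2 * t")
    case True
    then have "1 \<le> 4 * t / norm m" using \<open>0 < norm m\<close> \<open>0 < t\<close> by (simp add: field_simps)
    then have "V \<le> 4 * t / norm m * V" using \<open>0 \<le> V\<close> mult_right_mono[of 1 "4 * t / norm m" V] by simp
    moreover have "measure lebesgue S \<le> V"
      unfolding V_def by (rule measure_mono_fmeasurable) (auto simp: S_def fmeasurableD[OF S_lmeasurable])
    ultimately show ?thesis unfolding S_def V_def by linarith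
  next
    case False
    define x where "x = norm m / (2 * t)"
    have "1 \<le> x" using False \<open>0 < t\<close> unfolding x_def by (simp add: field_simps)
    define N where "N = nat \<lfloor>x\<rfloor>"
    have "1 \<le> \<lfloor>x\<rfloor>" using \<open>1 \<le> x\<close> by linarith
    then have "1 \<le> N" and N_floor: "real N = of_int \<lfloor>x\<rfloor>"
      using nat_mono[OF \<open>1 \<le> \<lfloor>x\<rfloor>\<close>] by (simp_all add: N_def)
    have "real N \<le> x" "x / 2 \<le> real N"
      using \<open>1 \<le> \<lfloor>x\<rfloor>\<close> floor_correct[of x] unfolding N_floor by linarith+
    define v where "v = (2 * t / (norm m)\<^sup>2) *\<^sub>R m"
    have "m \<bullet> v = 2 * t"
      unfolding v_def using \<open>0 < norm m\<close> by (simp add: power2_norm_eq_inner[symmetric] power2_eq_square)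
    have "x * norm v = 1"
      unfolding v_def x_def using \<open>0 < norm m\<close> \<open>0 < t\<close> by (simp add: power2_eq_square)
    have "real N * measure lebesgue S \<le> V"
      unfolding V_def
    proof (rule measure_le_of_disjoint_translates[OF S_lmeasurable])
      fix j y assume "j < N" "y \<in> S"
      have "norm (real j *\<^sub>R v + y) \<le> real j * norm v + norm y"
        using norm_triangle_ineq[of "real j *\<^sub>R v" y] by simp
      also have "real j * norm v \<le> x * norm v"
        using \<open>j < N\<close> \<open>real N \<le> x\<close> by (intro mult_right_mono) auto
      finally show "real j *\<^sub>R v + y \<in> cball 0 (R + 1)"
        using \<open>y \<in> S\<close> \<open>x * norm v = 1\<close> by (simp add: S_def)
    qed (auto simp: S_def intro!: slab_translates_disjoint[OF \<open>m \<bullet> v = 2 * t\<close>])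
    then have "measure lebesgue S \<le> V / real N" using \<open>1 \<le> N\<close> by (simp add: field_simps)
    also have "\<dots> \<le> V / (x / 2)"
      using \<open>x / 2 \<le> real N\<close> \<open>1 \<le> x\<close> \<open>0 \<le> V\<close> by (intro divide_left_mono) auto
    also have "\<dots> = 4 * t / norm m * V"
      unfolding x_def using \<open>0 < norm m\<close> \<open>0 < t\<close> by (simp add: field_simps)
    finally show ?thesis unfolding S_def V_def .
  qed
qed

lemma measure_density_le:
  fixes f :: "'a \<Rightarrow> real"
  assumes "f \<in> borel_measurable N" and "\<And>y. f y \<le> M" and "0 \<le> M"
    and "B \<in> sets N" and "emeasure N B < \<infinity>"
  shows "measure (density N (\<lambda>y. ennreal (f y))) B \<le> M * measure N B"
  unfolding measure_def
proof (rule enn2real_leI)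
  have "emeasure (density N (\<lambda>y. ennreal (f y))) B = (\<integral>\<^sup>+y. ennreal (f y) * indicator B y \<partial>N)"
    using assms by (subst emeasure_density) auto
  also have "\<dots> \<le> (\<integral>\<^sup>+y. ennreal M * indicator B y \<partial>N)"
    using assms by (intro nn_integral_mono) (auto simp: ennreal_leI split: split_indicator)
  also have "\<dots> = ennreal M * emeasure N B"
    using assms by (simp add: nn_integral_cmult_indicator)
  also have "\<dots> = ennreal (M * enn2real (emeasure N B))"
    using assms by (simp add: ennreal_mult ennreal_enn2real_if)
  finally show "emeasure (density N (\<lambda>y. ennreal (f y))) B \<le> ennreal (M * enn2real (emeasure N B))" .
qed (use assms in simp)

lemma (in prob_space) abs_prob_minus_expectation_le:
  assumes "S \<in> events" and "B \<in> events" and "w \<in> borel_measurable M"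
    and "\<And>y. y \<in> space M \<Longrightarrow> \<bar>w y\<bar> \<le> 1"
    and "\<And>y. y \<in> space M \<Longrightarrow> \<bar>indicator S y - w y\<bar> \<le> \<epsilon> + indicator B y"
  shows "\<bar>prob S - expectation w\<bar> \<le> \<epsilon> + prob B"
proof -
  have "integrable M w" using assms by (intro integrable_const_bound[where B = 1]) auto
  have "integrable M (indicator S :: 'a \<Rightarrow> real)"
    using assms by (intro integrable_const_bound[where B = 1]) (auto simp: indicator_def)
  with \<open>integrable M w\<close> have "\<bar>prob S - expectation w\<bar> = \<bar>expectation (\<lambda>y. indicator S y - w y)\<bar>"
    using assms by simp
  also have "\<dots> \<le> expectation (\<lambda>y. \<bar>indicator S y - w y\<bar>)"
    by (rule integral_abs_bound)
  also have "\<dots> \<le> expectation (\<lambda>y. \<epsilon> + indicator B y)"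
  proof (rule integral_mono)
    show "integrable M (\<lambda>y. \<epsilon> + indicator B y)"
      using assms by (intro integrable_const_bound[where B = "\<bar>\<epsilon>\<bar> + 1"]) (auto simp: indicator_def)
  qed (use assms \<open>integrable M w\<close> \<open>integrable M (indicator S)\<close> in auto)
  also have "\<dots> = \<epsilon> + prob B"
  proof (subst Bochner_Integration.integral_add)
    show "integrable M (indicator B :: 'a \<Rightarrow> real)"
      using assms by (intro integrable_const_bound[where B = 1]) (auto simp: indicator_def)
  qed (use assms in \<open>auto simp: prob_space\<close>)
  finally show ?thesis .
qed

lemma weta_nonneg: "0 \<le> weta m b l \<eta> y"
  unfolding weta_def by (intro prod_nonneg) (simp add: Phi_nonneg)

lemma weta_le_1: "weta m b l \<eta> y \<le> 1"
  unfolding weta_def by (intro prod_le_1) (simp add: Phi_nonneg Phi_le_1)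

lemma weta_le_if_violated:
  assumes "1 \<le> s" and "k < l" and "\<eta> * (b k - m k \<bullet> y) \<le> - s"
  shows "weta m b l \<eta> y \<le> exp (- s\<^sup>2 / 2)"
proof -
  have "weta m b l \<eta> y
      = Phi (\<eta> * (b k - m k \<bullet> y)) * (\<Prod>j\<in>{..<l} - {k}. Phi (\<eta> * (b j - m j \<bullet> y)))"
    unfolding weta_def using \<open>k < l\<close> by (simp add: prod.remove)
  also have "\<dots> \<le> Phi (\<eta> * (b k - m k \<bullet> y))"
    by (intro mult_left_le prod_le_1) (auto simp: Phi_nonneg Phi_le_1)
  also have "\<dots> \<le> exp (- s\<^sup>2 / 2)"
    using Phi_mono[OF assms(3)] Phi_neg_le[OF \<open>1 \<le> s\<close>] by simp
  finally show ?thesis .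
qed

lemma one_minus_weta_le_if_satisfied:
  assumes "1 \<le> s" and "\<forall>k<l. s \<le> \<eta> * (b k - m k \<bullet> y)"
  shows "1 - weta m b l \<eta> y \<le> real l * exp (- s\<^sup>2 / 2)"
proof -
  have "1 - Phi (\<eta> * (b k - m k \<bullet> y)) \<le> exp (- s\<^sup>2 / 2)" if "k < l" for k
    using assms that Phi_mono one_minus_Phi_le[OF \<open>1 \<le> s\<close>] by fastforce
  then have "(\<Sum>k<l. 1 - Phi (\<eta> * (b k - m k \<bullet> y))) \<le> real l * exp (- s\<^sup>2 / 2)"
    using sum_mono[of "{..<l}" _ "\<lambda>_. exp (- s\<^sup>2 / 2)"] by simp
  moreover have "1 - (\<Sum>k<l. 1 - Phi (\<eta> * (b k - m k \<bullet> y))) \<le> weta m b l \<eta> y"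
    using Weierstrass_prod_ineq[of "{..<l}" "\<lambda>k. 1 - Phi (\<eta> * (b k - m k \<bullet> y))"]
    by (simp add: weta_def Phi_nonneg Phi_le_1)
  ultimately show ?thesis by linarith
qed

text \<open>Outside the relaxed polytope some constraint is violated by at least \<open>s / \<eta>\<close>, so there
  both the indicator and the weight are small: the boundary layer may be cut down to a ball.\<close>
lemma abs_indicator_polytope_minus_weta_le:
  fixes m :: "nat \<Rightarrow> 'a::euclidean_space"
  assumes "1 \<le> s" and "0 < \<eta>"
    and relaxed: "polytope m (\<lambda>k. b k + s / \<eta>) l \<subseteq> cball 0 R"
  shows "\<bar>indicator (polytope m b l) y - weta m b l \<eta> y\<bar>
           \<le> real l * exp (- s\<^sup>2 / 2) + indicator (\<Union>k<l. {y. \<bar>b k - m k \<bullet> y\<bar> < s / \<eta>} \<inter> cball 0 R) y"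
    (is "_ \<le> real l * ?\<epsilon> + indicator ?B y")
proof -
  have "0 < s / \<eta>" "0 \<le> real l * ?\<epsilon>" using assms by simp_all
  consider (margin) "y \<in> ?B"
    | (outside) k where "k < l" "s / \<eta> \<le> m k \<bullet> y - b k"
    | (inside) "y \<notin> ?B" "\<forall>k<l. m k \<bullet> y - b k < s / \<eta>"
    by (meson not_le)
  then show ?thesis
  proof cases
    case margin
    then have "indicator ?B y = (1::real)" by simp
    moreover have "\<bar>indicator (polytope m b l) y - weta m b l \<eta> y\<bar> \<le> 1"
      using weta_nonneg[of m b l \<eta> y] weta_le_1[of m b l \<eta> y] by (simp add: indicator_def)
    ultimately show ?thesis using \<open>0 \<le> real l * ?\<epsilon>\<close> by linarith
  next
    case outside
    then have "y \<notin> polytope m b l" using \<open>0 < s / \<eta>\<close> by (force simp: polytope_def)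
    have "\<eta> * (b k - m k \<bullet> y) \<le> - s"
      using outside \<open>0 < \<eta>\<close> mult_left_mono[of "s / \<eta>" "m k \<bullet> y - b k" \<eta>] by (simp add: algebra_simps)
    then have "weta m b l \<eta> y \<le> ?\<epsilon>" by (rule weta_le_if_violated[OF \<open>1 \<le> s\<close> \<open>k < l\<close>])
    also have "\<dots> \<le> real l * ?\<epsilon>" using \<open>k < l\<close> mult_right_mono[of 1 "real l" ?\<epsilon>] by simp
    finally have "weta m b l \<eta> y \<le> real l * ?\<epsilon>" .
    then show ?thesis
      using \<open>y \<notin> polytope m b l\<close> weta_nonneg[of m b l \<eta> y] by (simp add: indicator_def)
  next
    case inside
    then have "y \<in> cball 0 R" using relaxed by (force simp: polytope_def)
    with inside have margin: "s / \<eta> \<le> b k - m k \<bullet> y" if "k < l" for k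
      using that by force
    then have "y \<in> polytope m b l" using \<open>0 < s / \<eta>\<close> by (force simp: polytope_def)
    moreover have "1 - weta m b l \<eta> y \<le> real l * ?\<epsilon>"
      by (rule one_minus_weta_le_if_satisfied[OF \<open>1 \<le> s\<close>])
         (use margin \<open>0 < \<eta>\<close> in \<open>simp add: pos_divide_le_eq mult.commute\<close>)
    moreover have "indicator ?B y = (0::real)" using inside(1) by simp
    ultimately show ?thesis using weta_le_1[of m b l \<eta> y] by simp
  qed
qed

lemma polytope_weta_error_le:
  fixes m :: "nat \<Rightarrow> 'a::euclidean_space" and f :: "'a \<Rightarrow> real"
  assumes "\<forall>k<l. m k \<noteq> 0" and "1 \<le> s" and "0 < \<eta>"
    and relaxed: "polytope m (\<lambda>k. b k + s / \<eta>) l \<subseteq> cball 0 R"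
    and "f \<in> borel_measurable borel" and "\<forall>y. 0 \<le> f y \<and> f y \<le> M"
    and "prob_space (density lborel (\<lambda>y. ennreal (f y)))"
  shows "\<bar>measure (density lborel (\<lambda>y. ennreal (f y))) (polytope m b l)
            - (\<integral>y. weta m b l \<eta> y \<partial>density lborel (\<lambda>y. ennreal (f y)))\<bar>
           \<le> real l * exp (- s\<^sup>2 / 2)
             + M * (\<Sum>k<l. 4 * (s / \<eta>) / norm (m k) * measure lebesgue (cball (0::'a) (R + 1)))"
proof -
  define N where "N = density lborel (\<lambda>y. ennreal (f y))"
  define slab where "slab k = {y. \<bar>b k - m k \<bullet> y\<bar> < s / \<eta>} \<inter> cball (0::'a) R" for k
  interpret N: prob_space N using assms by (simp add: N_def)
  have sets_N: "sets N = sets borel" by (simp add: N_def)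
  have slab_borel: "slab k \<in> sets borel" for k unfolding slab_def by measurable
  have "0 \<le> M" using assms(6) by force
  have "\<bar>weta m b l \<eta> y\<bar> \<le> 1" for y
    using weta_nonneg[of m b l \<eta> y] weta_le_1[of m b l \<eta> y] by simp
  moreover have "weta m b l \<eta> \<in> borel_measurable N"
    unfolding measurable_cong_sets[OF sets_N refl] weta_def by measurable
  moreover have "polytope m b l \<in> sets N"
    unfolding sets_N polytope_def by measurable
  ultimately have "\<bar>measure N (polytope m b l) - (\<integral>y. weta m b l \<eta> y \<partial>N)\<bar>
      \<le> real l * exp (- s\<^sup>2 / 2) + measure N (\<Union>k<l. slab k)"
    using abs_indicator_polytope_minus_weta_le[OF \<open>1 \<le> s\<close> \<open>0 < \<eta>\<close> relaxed] slab_borel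
    by (intro N.abs_prob_minus_expectation_le) (auto simp: sets_N slab_def)
  also have "measure N (\<Union>k<l. slab k) \<le> M * measure lborel (\<Union>k<l. slab k)"
    unfolding N_def
  proof (rule measure_density_le)
    have "bounded (\<Union>k<l. slab k)" by (auto simp: slab_def intro!: bounded_Int)
    then show "emeasure lborel (\<Union>k<l. slab k) < \<infinity>" by (rule emeasure_bounded_finite)
  qed (use assms \<open>0 \<le> M\<close> slab_borel in auto)
  also have "measure lborel (\<Union>k<l. slab k) \<le> (\<Sum>k<l. measure lborel (slab k))"
    using slab_borel by (intro measure_UNION_le) auto
  also have "\<dots> \<le> (\<Sum>k<l. 4 * (s / \<eta>) / norm (m k) * measure lebesgue (cball (0::'a) (R + 1)))"
  proof (rule sum_mono)
    fix k assume "k \<in> {..<l}"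
    then show "measure lborel (slab k) \<le> 4 * (s / \<eta>) / norm (m k) * measure lebesgue (cball (0::'a) (R + 1))"
      using measure_slab_Int_cball_le[of "m k" "s / \<eta>" "b k" R] assms slab_borel[of k]
      by (simp add: slab_def measure_completion)
  qed
  finally show ?thesis
    using \<open>0 \<le> M\<close> unfolding N_def by (simp add: mult_left_mono)
qed

lemma polytope_weta_error_le_sqrt_ln:
  fixes m :: "nat \<Rightarrow> 'a::euclidean_space" and f :: "'a \<Rightarrow> real"
  assumes "\<forall>k<l. m k \<noteq> 0" and "exp 1 \<le> \<eta>"
    and "polytope m (\<lambda>k. b k + sqrt (2 * ln \<eta>) / \<eta>) l \<subseteq> cball 0 R"
    and "f \<in> borel_measurable borel" and "\<forall>y. 0 \<le> f y \<and> f y \<le> M"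
    and "prob_space (density lborel (\<lambda>y. ennreal (f y)))"
  shows "\<bar>measure (density lborel (\<lambda>y. ennreal (f y))) (polytope m b l)
            - (\<integral>y. weta m b l \<eta> y \<partial>density lborel (\<lambda>y. ennreal (f y)))\<bar>
           \<le> (real l + M * (\<Sum>k<l. 4 * sqrt 2 / norm (m k) * measure lebesgue (cball (0::'a) (R + 1))))
              * sqrt (ln \<eta>) / \<eta>"
proof -
  define K where "K = (\<Sum>k<l. 4 * sqrt 2 / norm (m k) * measure lebesgue (cball (0::'a) (R + 1)))"
  have "0 < \<eta>" "1 \<le> \<eta>" "1 \<le> ln \<eta>"
    using assms(2) exp_ge_add_one_self[of 1] ln_ge_iff[of \<eta> 1] by linarith+
  then have "1 \<le> sqrt (2 * ln \<eta>)" "(sqrt (2 * ln \<eta>))\<^sup>2 = 2 * ln \<eta>"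
    by (simp_all add: real_le_rsqrt)
  then have "exp (- (sqrt (2 * ln \<eta>))\<^sup>2 / 2) = 1 / \<eta>"
    using \<open>0 < \<eta>\<close> by (simp add: exp_minus inverse_eq_divide)
  then have "\<bar>measure (density lborel (\<lambda>y. ennreal (f y))) (polytope m b l)
            - (\<integral>y. weta m b l \<eta> y \<partial>density lborel (\<lambda>y. ennreal (f y)))\<bar>
          \<le> real l / \<eta> + M * K * sqrt (ln \<eta>) / \<eta>"
    using polytope_weta_error_le[OF assms(1) \<open>1 \<le> sqrt (2 * ln \<eta>)\<close> \<open>0 < \<eta>\<close> assms(3-6)]
    by (simp add: K_def sum_distrib_left sum_divide_distrib real_sqrt_mult algebra_simps)
  also have "\<dots> \<le> (real l + M * K) * sqrt (ln \<eta>) / \<eta>"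
  proof -
    have "real l \<le> real l * sqrt (ln \<eta>)"
      using \<open>1 \<le> ln \<eta>\<close> mult_left_mono[of 1 "sqrt (ln \<eta>)" "real l"] by simp
    then show ?thesis using \<open>0 < \<eta>\<close> by (simp add: field_simps)
  qed
  finally show ?thesis unfolding K_def .
qed

theorem theorem1:
  fixes m :: "nat \<Rightarrow> 'a::euclidean_space" and b :: "nat \<Rightarrow> real"
    and l :: nat and M :: real
  assumes "\<forall>k<l. m k \<noteq> 0"
    and "bounded (polytope m b l)"
  shows "\<exists>C \<eta>0. \<forall>\<eta>\<ge>\<eta>0. \<forall>f :: 'a \<Rightarrow> real.
           (f \<in> borel_measurable borel \<and> (\<forall>y. 0 \<le> f y \<and> f y \<le> M)
            \<and> prob_space (density lborel (\<lambda>y. ennreal (f y))))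
           \<longrightarrow> \<bar>measure (density lborel (\<lambda>y. ennreal (f y))) (polytope m b l)
                 - (\<integral>y. weta m b l \<eta> y \<partial>(density lborel (\<lambda>y. ennreal (f y))))\<bar>
               \<le> C * sqrt (ln \<eta>) / \<eta>"
proof -
  obtain R where "\<forall>\<^sub>F t in at_right 0. polytope m (\<lambda>k. b k + t) l \<subseteq> cball 0 R"
    using eventually_relaxed_polytope_bounded[OF assms(2)] by blast
  moreover have "filterlim (\<lambda>\<eta>. sqrt (2 * ln \<eta>) / \<eta>) (at_right 0) at_top" by real_asymp
  ultimately have "\<forall>\<^sub>F \<eta> in at_top. polytope m (\<lambda>k. b k + sqrt (2 * ln \<eta>) / \<eta>) l \<subseteq> cball 0 R"
    by (rule eventually_compose_filterlim)
  with eventually_ge_at_top[of "exp 1"]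
  have "\<forall>\<^sub>F \<eta> in at_top. exp 1 \<le> \<eta> \<and> polytope m (\<lambda>k. b k + sqrt (2 * ln \<eta>) / \<eta>) l \<subseteq> cball 0 R"
    by (rule eventually_conj)
  then obtain \<eta>0 where "\<And>\<eta>. \<eta> \<ge> \<eta>0 \<Longrightarrow>
      exp 1 \<le> \<eta> \<and> polytope m (\<lambda>k. b k + sqrt (2 * ln \<eta>) / \<eta>) l \<subseteq> cball 0 R"
    unfolding eventually_at_top_linorder by blast
  then show ?thesis
    using polytope_weta_error_le_sqrt_ln[OF assms(1)] by blast
qed

end
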